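(* In the setting described in the context, for every $K\in\mathbb{N}$, $\mathcal{L}^K_\phi\ge\mathcal{L}^{K+1}_\phi$, where for $k\in\mathbb{N}$ $$\mathcal{L}^k_\phi=\mathbb{E}_{q^k_\phi(\tau)}\left[\sum_{t=0}^{k-1}\gamma^t\Big((1-\gamma)\log r(s_t,a_t)+\log e_\phi(z_{t+1}\mid s_{t+1})-\log m_\phi(z_{t+1}\mid z_t,a_t)\Big)+\gamma^k\log Q(s_k,a_k)\right].$$
   Context: An MDP has states $s$, actions $a$, initial state distribution $p_0(s)$, transition density $p(s_{t+1}\mid s_t,a_t)$, a nonnegative reward function $r(s,a)\ge 0$, and discount $\gamma\in[0,1)$ (convention $\log 0=-\infty$). An encoder $e_\phi(z\mid s)$ (conditional density over representations), a latent-space model $m_\phi(z_{t+1}\mid z_t,a_t)$ (conditional density), and a latent policy $\pi_\phi(a\mid z)$ are given. Trajectories are $\tau=(s_0,a_0,z_0,s_1,a_1,z_1,\dots)$, with true distribution $p_\phi(\tau)=p_0(s_0)\prod_{t\ge0}p(s_{t+1}\mid s_t,a_t)\pi_\phi(a_t\mid z_t)e_\phi(z_t\mid s_t)$. The Q-function is $Q(s,a)=\mathbb{E}_{p_\phi}[(1-\gamma)\sum_{t\ge0}\gamma^t r(s_t,a_t)\mid s_0=s,a_0=a]$. For $k\in\mathbb{N}$, $q^k_\phi(\tau)=p_0(s_0)e_\phi(z_0\mid s_0)\pi_\phi(a_0\mid z_0)\prod_{t=1}^k p(s_t\mid s_{t-1},a_{t-1})m_\phi(z_t\mid z_{t-1},a_{t-1})\pi_\phi(a_t\mid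 z_t)$. *)

theory Defs
  imports "HOL-Probability.Probability"
begin

text \<open>A finite trajectory prefix of horizon k is a function
  omega :: nat => state * action * latent on {0..k}, omega t = (s_t, a_t, z_t).\<close>

definition trS :: "(nat \<Rightarrow> 's \<times> 'a \<times> 'z) \<Rightarrow> nat \<Rightarrow> 's" where
  "trS \<omega> t = fst (\<omega> t)"
definition trA :: "(nat \<Rightarrow> 's \<times> 'a \<times> 'z) \<Rightarrow> nat \<Rightarrow> 'a" where
  "trA \<omega> t = fst (snd (\<omega> t))"
definition trZ :: "(nat \<Rightarrow> 's \<times> 'a \<times> 'z) \<Rightarrow> nat \<Rightarrow> 'z" where
  "trZ \<omega> t = snd (snd (\<omega> t))"

text \<open>Density of q^k_phi w.r.t. the product base measure on {0..k}.
  Conventions: p s a s' = p(s'|s,a), e s z = e(z|s), m z a z' = m(z'|z,a),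
  pol z a = pi(a|z).\<close>
definition q_dens ::
  "('s \<Rightarrow> real) \<Rightarrow> ('s \<Rightarrow> 'a \<Rightarrow> 's \<Rightarrow> real) \<Rightarrow> ('s \<Rightarrow> 'z \<Rightarrow> real)
   \<Rightarrow> ('z \<Rightarrow> 'a \<Rightarrow> 'z \<Rightarrow> real) \<Rightarrow> ('z \<Rightarrow> 'a \<Rightarrow> real) \<Rightarrow> nat
   \<Rightarrow> (nat \<Rightarrow> 's \<times> 'a \<times> 'z) \<Rightarrow> real" where
  "q_dens p0 p e m pol k \<omega> =
     p0 (trS \<omega> 0) * e (trS \<omega> 0) (trZ \<omega> 0) * pol (trZ \<omega> 0) (trA \<omega> 0) *
     (\<Prod>t\<in>{1..k}. p (trS \<omega> (t-1)) (trA \<omega> (t-1)) (trS \<omega> t)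
                  * m (trZ \<omega> (t-1)) (trA \<omega> (t-1)) (trZ \<omega> t)
                  * pol (trZ \<omega> t) (trA \<omega> t))"

definition q_traj ::
  "'s measure \<Rightarrow> 'a measure \<Rightarrow> 'z measure \<Rightarrow>
   ('s \<Rightarrow> real) \<Rightarrow> ('s \<Rightarrow> 'a \<Rightarrow> 's \<Rightarrow> real) \<Rightarrow> ('s \<Rightarrow> 'z \<Rightarrow> real)
   \<Rightarrow> ('z \<Rightarrow> 'a \<Rightarrow> 'z \<Rightarrow> real) \<Rightarrow> ('z \<Rightarrow> 'a \<Rightarrow> real) \<Rightarrow> nat
   \<Rightarrow> (nat \<Rightarrow> 's \<times> 'a \<times> 'z) measure" where
  "q_traj Ms Ma Mz p0 p e m pol k =
     density (\<Pi>\<^sub>M t\<in>{0..k}. Ms \<Otimes>\<^sub>M Ma \<Otimes>\<^sub>M Mz)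
             (\<lambda>\<omega>. ennreal (q_dens p0 p e m pol k \<omega>))"

text \<open>True dynamics p_phi conditioned on s_0 = s, a_0 = a, for times 1..n:
  density of (s_t, a_t, z_t)_{t=1..n} given (s_0,a_0) = (s,a).\<close>
definition cS :: "'s \<Rightarrow> (nat \<Rightarrow> 's \<times> 'a \<times> 'z) \<Rightarrow> nat \<Rightarrow> 's" where
  "cS s \<omega> t = (if t = 0 then s else trS \<omega> t)"
definition cA :: "'a \<Rightarrow> (nat \<Rightarrow> 's \<times> 'a \<times> 'z) \<Rightarrow> nat \<Rightarrow> 'a" where
  "cA a \<omega> t = (if t = 0 then a else trA \<omega> t)"

definition p_cond_dens ::
  "('s \<Rightarrow> 'a \<Rightarrow> 's \<Rightarrow> real) \<Rightarrow> ('s \<Rightarrow> 'z \<Rightarrow> real) \<Rightarrow> ('z \<Rightarrow> 'a \<Rightarrow> real)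
   \<Rightarrow> 's \<Rightarrow> 'a \<Rightarrow> nat \<Rightarrow> (nat \<Rightarrow> 's \<times> 'a \<times> 'z) \<Rightarrow> real" where
  "p_cond_dens p e pol s a n \<omega> =
     (\<Prod>t\<in>{1..n}. p (cS s \<omega> (t-1)) (cA a \<omega> (t-1)) (trS \<omega> t)
                  * e (trS \<omega> t) (trZ \<omega> t) * pol (trZ \<omega> t) (trA \<omega> t))"

definition p_cond ::
  "'s measure \<Rightarrow> 'a measure \<Rightarrow> 'z measure \<Rightarrow>
   ('s \<Rightarrow> 'a \<Rightarrow> 's \<Rightarrow> real) \<Rightarrow> ('s \<Rightarrow> 'z \<Rightarrow> real) \<Rightarrow> ('z \<Rightarrow> 'a \<Rightarrow> real)
   \<Rightarrow> 's \<Rightarrow> 'a \<Rightarrow> nat \<Rightarrow> (nat \<Rightarrow> 's \<times> 'a \<times> 'z) measure" where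
  "p_cond Ms Ma Mz p e pol s a n =
     density (\<Pi>\<^sub>M t\<in>{1..n}. Ms \<Otimes>\<^sub>M Ma \<Otimes>\<^sub>M Mz)
             (\<lambda>\<omega>. ennreal (p_cond_dens p e pol s a n \<omega>))"

text \<open>Q(s,a) = E[(1-gamma) sum_t gamma^t r(s_t,a_t) | s_0=s, a_0=a], computed
  (Tonelli, nonnegative rewards) as (1-gamma) sum_t gamma^t E[r(s_t,a_t) | s_0=s,a_0=a];
  values in [0,\<infinity>].\<close>
definition Qfun ::
  "'s measure \<Rightarrow> 'a measure \<Rightarrow> 'z measure \<Rightarrow>
   ('s \<Rightarrow> 'a \<Rightarrow> 's \<Rightarrow> real) \<Rightarrow> ('s \<Rightarrow> 'z \<Rightarrow> real) \<Rightarrow> ('z \<Rightarrow> 'a \<Rightarrow> real)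
   \<Rightarrow> ('s \<Rightarrow> 'a \<Rightarrow> real) \<Rightarrow> real \<Rightarrow> 's \<Rightarrow> 'a \<Rightarrow> ennreal" where
  "Qfun Ms Ma Mz p e pol r \<gamma> s a =
     ennreal (1 - \<gamma>) *
     (\<Sum>t. ennreal (\<gamma> ^ t) *
        (\<integral>\<^sup>+ \<omega>. ennreal (r (cS s \<omega> t) (cA a \<omega> t)) \<partial>p_cond Ms Ma Mz p e pol s a t))"

text \<open>Integrand of L^k (on the event where every logarithm is finite).\<close>
definition L_integrand ::
  "('s \<Rightarrow> 'a \<Rightarrow> ennreal) \<Rightarrow> ('s \<Rightarrow> 'z \<Rightarrow> real) \<Rightarrow> ('z \<Rightarrow> 'a \<Rightarrow> 'z \<Rightarrow> real)
   \<Rightarrow> ('s \<Rightarrow> 'a \<Rightarrow> real) \<Rightarrow> real \<Rightarrow> nat \<Rightarrow> (nat \<Rightarrow> 's \<times> 'a \<times> 'z) \<Rightarrow> real" where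
  "L_integrand Q e m r \<gamma> k \<omega> =
     (\<Sum>t<k. \<gamma> ^ t * ((1 - \<gamma>) * ln (r (trS \<omega> t) (trA \<omega> t))
                      + ln (e (trS \<omega> (Suc t)) (trZ \<omega> (Suc t)))
                      - ln (m (trZ \<omega> t) (trA \<omega> t) (trZ \<omega> (Suc t)))))
     + \<gamma> ^ k * ln (enn2real (Q (trS \<omega> k) (trA \<omega> k)))"

definition L_finite ::
  "(nat \<Rightarrow> 's \<times> 'a \<times> 'z) measure \<Rightarrow> ('s \<Rightarrow> 'a \<Rightarrow> ennreal) \<Rightarrow> ('s \<Rightarrow> 'z \<Rightarrow> real)
   \<Rightarrow> ('z \<Rightarrow> 'a \<Rightarrow> 'z \<Rightarrow> real) \<Rightarrow> ('s \<Rightarrow> 'a \<Rightarrow> real) \<Rightarrow> real \<Rightarrow> nat \<Rightarrow> bool" where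
  "L_finite q Q e m r \<gamma> k \<longleftrightarrow>
     (AE \<omega> in q. (\<forall>t<k. 0 < r (trS \<omega> t) (trA \<omega> t)
                      \<and> 0 < e (trS \<omega> (Suc t)) (trZ \<omega> (Suc t))
                      \<and> 0 < m (trZ \<omega> t) (trA \<omega> t) (trZ \<omega> (Suc t)))
                 \<and> 0 < Q (trS \<omega> k) (trA \<omega> k) \<and> Q (trS \<omega> k) (trA \<omega> k) < \<infinity>)
     \<and> integrable q (L_integrand Q e m r \<gamma> k)"

definition L_obj ::
  "(nat \<Rightarrow> 's \<times> 'a \<times> 'z) measure \<Rightarrow> ('s \<Rightarrow> 'a \<Rightarrow> ennreal) \<Rightarrow> ('s \<Rightarrow> 'z \<Rightarrow> real)
   \<Rightarrow> ('z \<Rightarrow> 'a \<Rightarrow> 'z \<Rightarrow> real) \<Rightarrow> ('s \<Rightarrow> 'a \<Rightarrow> real) \<Rightarrow> real \<Rightarrow> nat \<Rightarrow> real" where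
  "L_obj q Q e m r \<gamma> k = (\<integral>\<omega>. L_integrand Q e m r \<gamma> k \<omega> \<partial>q)"

end

theory Submission
  imports Defs
begin

(* Extending the horizon from K to K + 1 changes the integrand by
   gamma^K ((1 - gamma) log r + log e - log m + gamma log Q' - log Q), where r and Q are taken
   at (s_K, a_K), Q' at (s_(K+1), a_(K+1)), and e, m are the encoder and model densities of
   z_(K+1).  Concavity of log and log x <= x - 1 bound this by gamma^K (U - 1) for the
   importance ratio U = ((1 - gamma) r + gamma Q') e / (m Q).  Under q^(K+1) the last step has
   density p m pi, and the factor e / m turns it into the true one-step density p e pi.  So,
   given the first K steps, E[U] is at most ((1 - gamma) r + gamma P Q) / Q with P the
   transition operator of the true dynamics, and this is 1 by the Bellman equation
   Q = (1 - gamma) r + gamma P Q. *)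

lemma ln_mixture_le:
  fixes g R E M A B :: real
  assumes g: "0 \<le> g" "g < 1" and pos: "0 < R" "0 < E" "0 < M" "0 < A" "0 < B"
  shows "(1 - g) * ln R + ln E - ln M + g * ln B - ln A
         \<le> ((1 - g) * R + g * B) * E / (M * A) - 1"
proof -
  have mix_pos: "0 < (1 - g) * R + g * B"
    using g pos by (simp add: add_pos_nonneg)
  have "(1 - g) * ln R + g * ln B \<le> ln ((1 - g) * R + g * B)"
    using ln_concave g pos by (simp add: concave_on_iff)
  also have "\<dots> = ln (((1 - g) * R + g * B) * E / (M * A)) - ln E + ln M + ln A"
    using mix_pos pos by (simp add: ln_div ln_mult)
  also have "ln (((1 - g) * R + g * B) * E / (M * A)) \<le> ((1 - g) * R + g * B) * E / (M * A) - 1"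
    using mix_pos pos by (intro ln_le_minus_one) simp
  finally show ?thesis by simp
qed

lemma nn_integral_ennreal_cmult:
  assumes "0 \<le> c" "\<And>x. 0 \<le> f x" "f \<in> borel_measurable M"
  shows "(\<integral>\<^sup>+x. ennreal (c * f x) \<partial>M) = ennreal c * (\<integral>\<^sup>+x. ennreal (f x) \<partial>M)"
  using assms by (simp add: ennreal_mult nn_integral_cmult)

lemma (in product_sigma_finite) nn_integral_density_PiM_insert:
  assumes I: "finite I" "j \<notin> I"
    and d[measurable]: "d \<in> borel_measurable (PiM I M)"
    and d'[measurable]: "d' \<in> borel_measurable (PiM (insert j I) M)"
    and g[measurable]: "(\<lambda>(w, x). g w x) \<in> borel_measurable (PiM I M \<Otimes>\<^sub>M M j)"
    and factor: "\<And>w x. w \<in> space (PiM I M) \<Longrightarrow> x \<in> space (M j) \<Longrightarrow>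
                   d' (w(j := x)) = d w * g w x"
    and F[measurable]: "F \<in> borel_measurable (PiM (insert j I) M)"
  shows "(\<integral>\<^sup>+w. F w \<partial>density (PiM (insert j I) M) d')
       = (\<integral>\<^sup>+w. \<integral>\<^sup>+x. g w x * F (w(j := x)) \<partial>M j \<partial>density (PiM I M) d)"
proof -
  interpret Mj: sigma_finite_measure "M j" by (rule sigma_finite_measures)
  have "(\<integral>\<^sup>+w. F w \<partial>density (PiM (insert j I) M) d') = (\<integral>\<^sup>+w. d' w * F w \<partial>PiM (insert j I) M)"
    by (rule nn_integral_density) measurable
  also have "\<dots> = (\<integral>\<^sup>+w. \<integral>\<^sup>+x. d' (w(j := x)) * F (w(j := x)) \<partial>M j \<partial>PiM I M)"
    using I by (intro product_nn_integral_insert) measurable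
  also have "\<dots> = (\<integral>\<^sup>+w. d w * (\<integral>\<^sup>+x. g w x * F (w(j := x)) \<partial>M j) \<partial>PiM I M)"
  proof (rule nn_integral_cong)
    fix w assume w: "w \<in> space (PiM I M)"
    have "(\<integral>\<^sup>+x. d' (w(j := x)) * F (w(j := x)) \<partial>M j) = (\<integral>\<^sup>+x. d w * (g w x * F (w(j := x))) \<partial>M j)"
      using w by (intro nn_integral_cong) (simp add: factor mult.assoc)
    also have "\<dots> = d w * (\<integral>\<^sup>+x. g w x * F (w(j := x)) \<partial>M j)"
      using w by (intro nn_integral_cmult) measurable
    finally show "(\<integral>\<^sup>+x. d' (w(j := x)) * F (w(j := x)) \<partial>M j)
        = d w * (\<integral>\<^sup>+x. g w x * F (w(j := x)) \<partial>M j)" .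
  qed
  also have "\<dots> = (\<integral>\<^sup>+w. \<integral>\<^sup>+x. g w x * F (w(j := x)) \<partial>M j \<partial>density (PiM I M) d)"
    by (rule nn_integral_density[symmetric]) measurable
  finally show ?thesis .
qed

lemma trS_measurable[measurable]:
  "t \<in> I \<Longrightarrow> (\<lambda>w. trS w t) \<in> measurable (PiM I (\<lambda>_. Ms \<Otimes>\<^sub>M Ma \<Otimes>\<^sub>M Mz)) Ms"
  unfolding trS_def by measurable

lemma trA_measurable[measurable]:
  "t \<in> I \<Longrightarrow> (\<lambda>w. trA w t) \<in> measurable (PiM I (\<lambda>_. Ms \<Otimes>\<^sub>M Ma \<Otimes>\<^sub>M Mz)) Ma"
  unfolding trA_def by measurable

lemma trZ_measurable[measurable]:
  "t \<in> I \<Longrightarrow> (\<lambda>w. trZ w t) \<in> measurable (PiM I (\<lambda>_. Ms \<Otimes>\<^sub>M Ma \<Otimes>\<^sub>M Mz)) Mz"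
  unfolding trZ_def by measurable

lemma cS_measurable:
  "s \<in> space Ms \<Longrightarrow> t = 0 \<or> t \<in> I \<Longrightarrow> (\<lambda>w. cS s w t) \<in> measurable (PiM I (\<lambda>_. Ms \<Otimes>\<^sub>M Ma \<Otimes>\<^sub>M Mz)) Ms"
  unfolding cS_def by (cases "t = 0") auto

lemma cA_measurable:
  "a \<in> space Ma \<Longrightarrow> t = 0 \<or> t \<in> I \<Longrightarrow> (\<lambda>w. cA a w t) \<in> measurable (PiM I (\<lambda>_. Ms \<Otimes>\<^sub>M Ma \<Otimes>\<^sub>M Mz)) Ma"
  unfolding cA_def by (cases "t = 0") auto

locale latent_mdp =
  fixes Ms :: "'s measure" and Ma :: "'a measure" and Mz :: "'z measure"
    and p0 :: "'s \<Rightarrow> real" and p :: "'s \<Rightarrow> 'a \<Rightarrow> 's \<Rightarrow> real"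
    and e :: "'s \<Rightarrow> 'z \<Rightarrow> real" and m :: "'z \<Rightarrow> 'a \<Rightarrow> 'z \<Rightarrow> real"
    and pol :: "'z \<Rightarrow> 'a \<Rightarrow> real" and r :: "'s \<Rightarrow> 'a \<Rightarrow> real"
    and \<gamma> :: real
  assumes sfS: "sigma_finite_measure Ms"
    and sfA: "sigma_finite_measure Ma"
    and sfZ: "sigma_finite_measure Mz"
    and gamma: "0 \<le> \<gamma>" "\<gamma> < 1"
    and p0_meas: "p0 \<in> borel_measurable Ms"
    and p0_nonneg: "\<And>s. 0 \<le> p0 s"
    and p0_norm: "(\<integral>\<^sup>+ s. ennreal (p0 s) \<partial>Ms) = 1"
    and p_meas: "(\<lambda>(s, a, s'). p s a s') \<in> borel_measurable (Ms \<Otimes>\<^sub>M Ma \<Otimes>\<^sub>M Ms)"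
    and p_nonneg: "\<And>s a s'. 0 \<le> p s a s'"
    and p_norm: "\<And>s a. s \<in> space Ms \<Longrightarrow> a \<in> space Ma \<Longrightarrow>
                   (\<integral>\<^sup>+ s'. ennreal (p s a s') \<partial>Ms) = 1"
    and e_meas: "(\<lambda>(s, z). e s z) \<in> borel_measurable (Ms \<Otimes>\<^sub>M Mz)"
    and e_nonneg: "\<And>s z. 0 \<le> e s z"
    and e_norm: "\<And>s. s \<in> space Ms \<Longrightarrow> (\<integral>\<^sup>+ z. ennreal (e s z) \<partial>Mz) = 1"
    and m_meas: "(\<lambda>(z, a, z'). m z a z') \<in> borel_measurable (Mz \<Otimes>\<^sub>M Ma \<Otimes>\<^sub>M Mz)"
    and m_nonneg: "\<And>z a z'. 0 \<le> m z a z'"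
    and m_norm: "\<And>z a. z \<in> space Mz \<Longrightarrow> a \<in> space Ma \<Longrightarrow>
                   (\<integral>\<^sup>+ z'. ennreal (m z a z') \<partial>Mz) = 1"
    and pol_meas: "(\<lambda>(z, a). pol z a) \<in> borel_measurable (Mz \<Otimes>\<^sub>M Ma)"
    and pol_nonneg: "\<And>z a. 0 \<le> pol z a"
    and pol_norm: "\<And>z. z \<in> space Mz \<Longrightarrow> (\<integral>\<^sup>+ a. ennreal (pol z a) \<partial>Ma) = 1"
    and r_meas: "(\<lambda>(s, a). r s a) \<in> borel_measurable (Ms \<Otimes>\<^sub>M Ma)"
    and r_nonneg: "\<And>s a. 0 \<le> r s a"
begin

abbreviation "Msaz \<equiv> Ms \<Otimes>\<^sub>M Ma \<Otimes>\<^sub>M Mz"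
abbreviation "Q \<equiv> Qfun Ms Ma Mz p e pol r \<gamma>"
abbreviation "qtraj k \<equiv> q_traj Ms Ma Mz p0 p e m pol k"

sublocale A: sigma_finite_measure Ma by (rule sfA)
sublocale Z: sigma_finite_measure Mz by (rule sfZ)
sublocale AZ: pair_sigma_finite Ma Mz ..
sublocale SAZ: sigma_finite_measure Msaz
  by (intro sigma_finite_pair_measure sfS sfA sfZ)
sublocale Traj: product_sigma_finite "\<lambda>_::nat. Msaz"
  unfolding product_sigma_finite_def using SAZ.sigma_finite_measure_axioms by simp

lemma p_measurable[measurable (raw)]:
  "f \<in> measurable N Ms \<Longrightarrow> g \<in> measurable N Ma \<Longrightarrow> h \<in> measurable N Ms \<Longrightarrow>
   (\<lambda>x. p (f x) (g x) (h x)) \<in> borel_measurable N"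
  using measurable_compose[OF _ p_meas, of "\<lambda>x. (f x, g x, h x)"] by simp

lemma m_measurable[measurable (raw)]:
  "f \<in> measurable N Mz \<Longrightarrow> g \<in> measurable N Ma \<Longrightarrow> h \<in> measurable N Mz \<Longrightarrow>
   (\<lambda>x. m (f x) (g x) (h x)) \<in> borel_measurable N"
  using measurable_compose[OF _ m_meas, of "\<lambda>x. (f x, g x, h x)"] by simp

lemma e_measurable[measurable (raw)]:
  "f \<in> measurable N Ms \<Longrightarrow> g \<in> measurable N Mz \<Longrightarrow> (\<lambda>x. e (f x) (g x)) \<in> borel_measurable N"
  using measurable_compose[OF _ e_meas, of "\<lambda>x. (f x, g x)"] by simp

lemma pol_measurable[measurable (raw)]:
  "f \<in> measurable N Mz \<Longrightarrow> g \<in> measurable N Ma \<Longrightarrow> (\<lambda>x. pol (f x) (g x)) \<in> borel_measurable N"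
  using measurable_compose[OF _ pol_meas, of "\<lambda>x. (f x, g x)"] by simp

lemma r_measurable[measurable (raw)]:
  "f \<in> measurable N Ms \<Longrightarrow> g \<in> measurable N Ma \<Longrightarrow> (\<lambda>x. r (f x) (g x)) \<in> borel_measurable N"
  using measurable_compose[OF _ r_meas, of "\<lambda>x. (f x, g x)"] by simp

lemma p0_measurable[measurable (raw)]:
  "f \<in> measurable N Ms \<Longrightarrow> (\<lambda>x. p0 (f x)) \<in> borel_measurable N"
  using measurable_compose[OF _ p0_meas, of f] by simp

lemma nn_integral_chain_density:
  assumes f[measurable]: "f \<in> borel_measurable Ms" and f_nonneg: "\<And>s. 0 \<le> f s"
    and f_norm: "(\<integral>\<^sup>+s. ennreal (f s) \<partial>Ms) = 1"
    and g[measurable]: "(\<lambda>(s, z). g s z) \<in> borel_measurable (Ms \<Otimes>\<^sub>M Mz)"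
    and g_nonneg: "\<And>s z. 0 \<le> g s z"
    and g_norm: "\<And>s. s \<in> space Ms \<Longrightarrow> (\<integral>\<^sup>+z. ennreal (g s z) \<partial>Mz) = 1"
  shows "(\<integral>\<^sup>+(s, a, z). ennreal (f s * g s z * pol z a) \<partial>Msaz) = 1"
proof -
  have integrand[measurable]: "(\<lambda>(s, a, z). ennreal (f s * g s z * pol z a)) \<in> borel_measurable Msaz"
    by measurable
  have "(\<integral>\<^sup>+(s, a, z). ennreal (f s * g s z * pol z a) \<partial>Msaz)
      = (\<integral>\<^sup>+s. \<integral>\<^sup>+(a, z). ennreal (f s * g s z * pol z a) \<partial>(Ma \<Otimes>\<^sub>M Mz) \<partial>Ms)"
    using AZ.P.nn_integral_fst[OF integrand] by simp
  also have "\<dots> = (\<integral>\<^sup>+s. \<integral>\<^sup>+z. \<integral>\<^sup>+a. ennreal (f s * g s z * pol z a) \<partial>Ma \<partial>Mz \<partial>Ms)"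
  proof (rule nn_integral_cong)
    fix s assume "s \<in> space Ms"
    then have "(\<lambda>(a, z). ennreal (f s * g s z * pol z a)) \<in> borel_measurable (Ma \<Otimes>\<^sub>M Mz)"
      by measurable
    from AZ.nn_integral_snd[OF this]
    show "(\<integral>\<^sup>+(a, z). ennreal (f s * g s z * pol z a) \<partial>(Ma \<Otimes>\<^sub>M Mz))
        = (\<integral>\<^sup>+z. \<integral>\<^sup>+a. ennreal (f s * g s z * pol z a) \<partial>Ma \<partial>Mz)"
      by simp
  qed
  also have "\<dots> = (\<integral>\<^sup>+s. \<integral>\<^sup>+z. ennreal (f s * g s z) \<partial>Mz \<partial>Ms)"
    by (intro nn_integral_cong)
       (simp add: nn_integral_ennreal_cmult f_nonneg g_nonneg pol_nonneg pol_norm)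
  also have "\<dots> = (\<integral>\<^sup>+s. ennreal (f s) \<partial>Ms)"
    by (intro nn_integral_cong) (simp add: nn_integral_ennreal_cmult f_nonneg g_nonneg g_norm)
  finally show ?thesis
    using f_norm by simp
qed

section \<open>The transition operator and the Bellman equation\<close>

definition trans_dens :: "'s \<Rightarrow> 'a \<Rightarrow> 's \<times> 'a \<times> 'z \<Rightarrow> real" where
  "trans_dens s a = (\<lambda>(s', a', z'). p s a s' * e s' z' * pol z' a')"

definition trans_op :: "('s \<Rightarrow> 'a \<Rightarrow> ennreal) \<Rightarrow> 's \<Rightarrow> 'a \<Rightarrow> ennreal" where
  "trans_op h s a = (\<integral>\<^sup>+x. ennreal (trans_dens s a x) * h (fst x) (fst (snd x)) \<partial>Msaz)"

lemma trans_dens_nonneg: "0 \<le> trans_dens s a x"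
  by (auto simp: trans_dens_def p_nonneg e_nonneg pol_nonneg split: prod.split)

lemma trans_dens_measurable[measurable (raw)]:
  assumes [measurable]: "f \<in> measurable N Ms" "g \<in> measurable N Ma" "k \<in> measurable N Msaz"
  shows "(\<lambda>x. trans_dens (f x) (g x) (k x)) \<in> borel_measurable N"
  unfolding trans_dens_def case_prod_beta by measurable

lemma nn_integral_trans_dens:
  assumes "s \<in> space Ms" "a \<in> space Ma"
  shows "(\<integral>\<^sup>+x. ennreal (trans_dens s a x) \<partial>Msaz) = 1"
proof -
  have "(\<lambda>x. ennreal (trans_dens s a x)) = (\<lambda>(s', a', z'). ennreal (p s a s' * e s' z' * pol z' a'))"
    by (auto simp: trans_dens_def)
  moreover have "(\<integral>\<^sup>+(s', a', z'). ennreal (p s a s' * e s' z' * pol z' a') \<partial>Msaz) = 1"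
    using assms e_meas
    by (intro nn_integral_chain_density) (measurable, auto simp: p_nonneg p_norm e_nonneg e_norm)
  ultimately show ?thesis
    by simp
qed

lemma trans_op_measurable[measurable]:
  assumes [measurable]: "case_prod h \<in> borel_measurable (Ms \<Otimes>\<^sub>M Ma)"
  shows "case_prod (trans_op h) \<in> borel_measurable (Ms \<Otimes>\<^sub>M Ma)"
  unfolding trans_op_def by measurable

lemma trans_op_cong:
  "s \<in> space Ms \<Longrightarrow> a \<in> space Ma \<Longrightarrow> (\<And>s a. s \<in> space Ms \<Longrightarrow> a \<in> space Ma \<Longrightarrow> h s a = h' s a)
   \<Longrightarrow> trans_op h s a = trans_op h' s a"
  unfolding trans_op_def by (intro nn_integral_cong) (auto simp: space_pair_measure)

lemma trans_op_const:
  assumes "s \<in> space Ms" "a \<in> space Ma"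
  shows "trans_op (\<lambda>_ _. c) s a = c"
  unfolding trans_op_def using assms
  by (subst nn_integral_multc) (measurable, simp add: nn_integral_trans_dens)

lemma trans_op_cmult:
  assumes [measurable]: "case_prod h \<in> borel_measurable (Ms \<Otimes>\<^sub>M Ma)"
    and "s \<in> space Ms" "a \<in> space Ma"
  shows "trans_op (\<lambda>s a. c * h s a) s a = c * trans_op h s a"
  unfolding trans_op_def using assms
  by (subst nn_integral_cmult[symmetric]) (measurable, simp add: ac_simps)

lemma trans_op_add:
  assumes [measurable]: "case_prod h \<in> borel_measurable (Ms \<Otimes>\<^sub>M Ma)"
    "case_prod h' \<in> borel_measurable (Ms \<Otimes>\<^sub>M Ma)"
    and "s \<in> space Ms" "a \<in> space Ma"
  shows "trans_op (\<lambda>s a. h s a + h' s a) s a = trans_op h s a + trans_op h' s a"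
  unfolding trans_op_def using assms
  by (subst nn_integral_add[symmetric]) (measurable, simp add: distrib_left)

lemma trans_op_suminf:
  assumes h: "\<And>i. case_prod (h i) \<in> borel_measurable (Ms \<Otimes>\<^sub>M Ma)"
    and sa: "s \<in> space Ms" "a \<in> space Ma"
  shows "trans_op (\<lambda>s a. \<Sum>i. h i s a) s a = (\<Sum>i. trans_op (h i) s a)"
proof -
  have meas: "(\<lambda>x. ennreal (trans_dens s a x) * h i (fst x) (fst (snd x))) \<in> borel_measurable Msaz" for i
  proof -
    note [measurable] = h[of i]
    show ?thesis using sa by measurable
  qed
  show ?thesis
    unfolding trans_op_def by (subst nn_integral_suminf[symmetric]) (simp_all add: meas)
qed

lemma p_cond_dens_nonneg: "0 \<le> p_cond_dens p e pol s a t w"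
  unfolding p_cond_dens_def by (intro prod_nonneg mult_nonneg_nonneg p_nonneg e_nonneg pol_nonneg)

lemma p_cond_dens_Suc:
  "p_cond_dens p e pol s a (Suc t) (w(Suc t := x))
   = p_cond_dens p e pol s a t w * trans_dens (cS s w t) (cA a w t) x"
  unfolding p_cond_dens_def trans_dens_def
  by (subst prod.nat_ivl_Suc')
     (auto simp: cS_def cA_def trS_def trA_def trZ_def mult.commute split: prod.split intro!: prod.cong)

lemma p_cond_dens_measurable[measurable]:
  "s \<in> space Ms \<Longrightarrow> a \<in> space Ma \<Longrightarrow> p_cond_dens p e pol s a n \<in> borel_measurable (PiM {1..n} (\<lambda>_. Msaz))"
  unfolding p_cond_dens_def
  by (intro borel_measurable_times borel_measurable_prod p_measurable e_measurable pol_measurable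
      trS_measurable trA_measurable trZ_measurable cS_measurable cA_measurable) auto

lemma nn_integral_p_cond:
  assumes sa: "s \<in> space Ms" "a \<in> space Ma" and h: "case_prod h \<in> borel_measurable (Ms \<Otimes>\<^sub>M Ma)"
  shows "(\<integral>\<^sup>+w. h (cS s w t) (cA a w t) \<partial>p_cond Ms Ma Mz p e pol s a t) = (trans_op ^^ t) h s a"
  using h
proof (induction t arbitrary: h)
  case 0
  have "(\<integral>\<^sup>+w. h (cS s w 0) (cA a w 0) \<partial>p_cond Ms Ma Mz p e pol s a 0)
      = (\<integral>\<^sup>+w. h s a \<partial>count_space {\<lambda>_. undefined})"
    by (simp add: p_cond_def p_cond_dens_def cS_def cA_def PiM_empty density_1)
  then show ?case by (simp add: nn_integral_count_space_finite)
next
  case (Suc t)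
  note h_meas[measurable] = measurable_Pair_compose_split[OF Suc.prems]
  have ivl: "{1..Suc t} = insert (Suc t) {1..t}" by auto
  have [measurable]: "(\<lambda>w. cS s w t) \<in> measurable (PiM {1..t} (\<lambda>_. Msaz)) Ms"
    "(\<lambda>w. cA a w t) \<in> measurable (PiM {1..t} (\<lambda>_. Msaz)) Ma"
    "(\<lambda>w. cS s w (Suc t)) \<in> measurable (PiM (insert (Suc t) {1..t}) (\<lambda>_. Msaz)) Ms"
    "(\<lambda>w. cA a w (Suc t)) \<in> measurable (PiM (insert (Suc t) {1..t}) (\<lambda>_. Msaz)) Ma"
    by (rule cS_measurable[OF sa(1)] cA_measurable[OF sa(2)], auto)+
  have d: "(\<lambda>w. ennreal (p_cond_dens p e pol s a t w)) \<in> borel_measurable (PiM {1..t} (\<lambda>_. Msaz))"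
    using p_cond_dens_measurable[OF sa] by (rule measurable_compose[OF _ measurable_ennreal])
  have d': "(\<lambda>w. ennreal (p_cond_dens p e pol s a (Suc t) w))
      \<in> borel_measurable (PiM (insert (Suc t) {1..t}) (\<lambda>_. Msaz))"
    using p_cond_dens_measurable[OF sa, of "Suc t"] unfolding ivl by (rule measurable_compose[OF _ measurable_ennreal])
  have W: "(\<lambda>(w, x). ennreal (trans_dens (cS s w t) (cA a w t) x))
      \<in> borel_measurable (PiM {1..t} (\<lambda>_. Msaz) \<Otimes>\<^sub>M Msaz)"
    by measurable
  have F: "(\<lambda>w. h (cS s w (Suc t)) (cA a w (Suc t))) \<in> borel_measurable (PiM (insert (Suc t) {1..t}) (\<lambda>_. Msaz))"
    by measurable
  have factor: "ennreal (p_cond_dens p e pol s a (Suc t) (w(Suc t := x)))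
      = ennreal (p_cond_dens p e pol s a t w) * ennreal (trans_dens (cS s w t) (cA a w t) x)" for w x
    by (simp add: p_cond_dens_Suc ennreal_mult p_cond_dens_nonneg trans_dens_nonneg)
  have "(\<integral>\<^sup>+w. h (cS s w (Suc t)) (cA a w (Suc t)) \<partial>p_cond Ms Ma Mz p e pol s a (Suc t))
      = (\<integral>\<^sup>+w. \<integral>\<^sup>+x. ennreal (trans_dens (cS s w t) (cA a w t) x)
              * h (cS s (w(Suc t := x)) (Suc t)) (cA a (w(Suc t := x)) (Suc t)) \<partial>Msaz
           \<partial>p_cond Ms Ma Mz p e pol s a t)"
    unfolding p_cond_def ivl
    by (rule Traj.nn_integral_density_PiM_insert[OF _ _ d d' W factor F]) simp_all
  also have "\<dots> = (\<integral>\<^sup>+w. trans_op h (cS s w t) (cA a w t) \<partial>p_cond Ms Ma Mz p e pol s a t)"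
    by (simp add: trans_op_def cS_def cA_def trS_def trA_def)
  also have "\<dots> = (trans_op ^^ t) (trans_op h) s a"
    using Suc.IH trans_op_measurable[OF Suc.prems] by blast
  finally show ?case
    by (simp only: funpow_Suc_right comp_def)
qed

lemma trans_op_funpow_measurable[measurable]:
  assumes [measurable]: "case_prod h \<in> borel_measurable (Ms \<Otimes>\<^sub>M Ma)"
  shows "case_prod ((trans_op ^^ t) h) \<in> borel_measurable (Ms \<Otimes>\<^sub>M Ma)"
  by (induction t) auto

lemma ennreal_reward_measurable[measurable]:
  "case_prod (\<lambda>s a. ennreal (r s a)) \<in> borel_measurable (Ms \<Otimes>\<^sub>M Ma)"
  by measurable

lemma Q_eq_series:
  assumes "s \<in> space Ms" "a \<in> space Ma"
  shows "Q s a = ennreal (1 - \<gamma>) * (\<Sum>t. ennreal (\<gamma> ^ t) * (trans_op ^^ t) (\<lambda>s a. ennreal (r s a)) s a)"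
  unfolding Qfun_def by (simp add: nn_integral_p_cond[OF assms ennreal_reward_measurable])


lemma Q_measurable: "case_prod Q \<in> borel_measurable (Ms \<Otimes>\<^sub>M Ma)"
proof -
  note [measurable] = measurable_Pair_compose_split[OF trans_op_funpow_measurable[OF ennreal_reward_measurable]]
  have "(\<lambda>(s, a). ennreal (1 - \<gamma>) * (\<Sum>t. ennreal (\<gamma> ^ t) * (trans_op ^^ t) (\<lambda>s a. ennreal (r s a)) s a))
      \<in> borel_measurable (Ms \<Otimes>\<^sub>M Ma)"
    by measurable
  then show ?thesis
    by (rule measurable_cong[THEN iffD1, rotated]) (auto simp: space_pair_measure Q_eq_series)
qed

lemma Q_bellman:
  assumes sa: "s \<in> space Ms" "a \<in> space Ma"
  shows "Q s a = ennreal ((1 - \<gamma>) * r s a) + ennreal \<gamma> * trans_op Q s a"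
proof -
  let ?R = "\<lambda>t. (trans_op ^^ t) (\<lambda>s a. ennreal (r s a))"
  let ?F = "\<lambda>t. ennreal (\<gamma> ^ t) * ?R t s a"
  let ?X = "\<Sum>t. ennreal (\<gamma> ^ t) * ?R (Suc t) s a"
  note [measurable] = measurable_Pair_compose_split[OF trans_op_funpow_measurable[OF ennreal_reward_measurable]]
  have "trans_op Q s a = trans_op (\<lambda>s a. ennreal (1 - \<gamma>) * (\<Sum>t. ennreal (\<gamma> ^ t) * ?R t s a)) s a"
    using sa by (intro trans_op_cong) (auto simp: Q_eq_series)
  also have "\<dots> = ennreal (1 - \<gamma>) * trans_op (\<lambda>s a. \<Sum>t. ennreal (\<gamma> ^ t) * ?R t s a) s a"
    using sa by (intro trans_op_cmult) measurable
  also have "trans_op (\<lambda>s a. \<Sum>t. ennreal (\<gamma> ^ t) * ?R t s a) s a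
      = (\<Sum>t. trans_op (\<lambda>s a. ennreal (\<gamma> ^ t) * ?R t s a) s a)"
    using sa by (intro trans_op_suminf) measurable
  also have "\<dots> = ?X"
    by (simp add: trans_op_cmult[OF trans_op_funpow_measurable[OF ennreal_reward_measurable] sa])
  finally have next_step: "trans_op Q s a = ennreal (1 - \<gamma>) * ?X" .
  have "(\<lambda>t. ?F (Suc t)) sums (\<Sum>t. ?F (Suc t))"
    by (rule summable_sums[OF summableI])
  then have "?F sums ((\<Sum>t. ?F (Suc t)) + ?F 0)"
    by (rule sums_Suc)
  then have "(\<Sum>t. ?F t) = (\<Sum>t. ennreal \<gamma> * (ennreal (\<gamma> ^ t) * ?R (Suc t) s a)) + ennreal (r s a)"
    using gamma by (simp add: sums_iff ennreal_mult mult.assoc)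
  also have "\<dots> = ennreal \<gamma> * ?X + ennreal (r s a)"
    by (rule arg_cong2[where f = "(+)"], rule ennreal_suminf_cmult, rule refl)
  finally have "Q s a = ennreal (1 - \<gamma>) * ennreal (r s a) + ennreal \<gamma> * (ennreal (1 - \<gamma>) * ?X)"
    using sa by (simp add: Q_eq_series distrib_left mult.left_commute add.commute)
  then show ?thesis
    using gamma r_nonneg by (simp add: next_step ennreal_mult)
qed

section \<open>The model distribution of trajectories\<close>

lemma sets_q_traj[measurable_cong]: "sets (qtraj k) = sets (PiM {0..k} (\<lambda>_. Msaz))"
  by (simp add: q_traj_def)

lemma space_q_traj: "space (qtraj k) = space (PiM {0..k} (\<lambda>_. Msaz))"
  by (simp add: q_traj_def)

definition model_dens :: "'s \<times> 'a \<times> 'z \<Rightarrow> 's \<times> 'a \<times> 'z \<Rightarrow> real" where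
  "model_dens = (\<lambda>(s, a, z) (s', a', z'). p s a s' * m z a z' * pol z' a')"

lemma model_dens_nonneg: "0 \<le> model_dens y x"
  by (auto simp: model_dens_def p_nonneg m_nonneg pol_nonneg split: prod.split)

lemma model_dens_measurable[measurable]: "case_prod model_dens \<in> borel_measurable (Msaz \<Otimes>\<^sub>M Msaz)"
  unfolding model_dens_def case_prod_beta by measurable

lemma nn_integral_model_dens:
  assumes "y \<in> space Msaz"
  shows "(\<integral>\<^sup>+x. ennreal (model_dens y x) \<partial>Msaz) = 1"
proof -
  obtain s a z where y: "y = (s, a, z)" and sa: "s \<in> space Ms" "a \<in> space Ma" "z \<in> space Mz"
    using assms by (cases y) (auto simp: space_pair_measure)
  have "(\<lambda>x. ennreal (model_dens y x)) = (\<lambda>(s', a', z'). ennreal (p s a s' * m z a z' * pol z' a'))"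
    by (auto simp: model_dens_def y)
  moreover have "(\<integral>\<^sup>+(s', a', z'). ennreal (p s a s' * m z a z' * pol z' a') \<partial>Msaz) = 1"
    using sa
    by (intro nn_integral_chain_density[where g = "\<lambda>_ z'. m z a z'"])
       (measurable, auto simp: p_nonneg p_norm m_nonneg m_norm)
  ultimately show ?thesis
    by simp
qed

lemma q_dens_nonneg: "0 \<le> q_dens p0 p e m pol k w"
  unfolding q_dens_def
  by (intro prod_nonneg mult_nonneg_nonneg p_nonneg e_nonneg pol_nonneg p0_nonneg m_nonneg)

lemma q_dens_Suc:
  "q_dens p0 p e m pol (Suc k) (w(Suc k := x)) = q_dens p0 p e m pol k w * model_dens (w k) x"
  unfolding q_dens_def model_dens_def
  by (subst prod.nat_ivl_Suc')
     (auto simp: trS_def trA_def trZ_def case_prod_beta ac_simps intro!: prod.cong)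

lemma q_dens_measurable[measurable]:
  "q_dens p0 p e m pol k \<in> borel_measurable (PiM {0..k} (\<lambda>_. Msaz))"
  unfolding q_dens_def
  by (intro borel_measurable_times borel_measurable_prod p_measurable m_measurable e_measurable
      pol_measurable p0_measurable trS_measurable trA_measurable trZ_measurable) auto

lemma nn_integral_q_traj_Suc:
  assumes F: "F \<in> borel_measurable (PiM {0..Suc k} (\<lambda>_. Msaz))"
  shows "(\<integral>\<^sup>+w. F w \<partial>qtraj (Suc k))
       = (\<integral>\<^sup>+w. \<integral>\<^sup>+x. ennreal (model_dens (w k) x) * F (w(Suc k := x)) \<partial>Msaz \<partial>qtraj k)"
proof -
  have ivl: "{0..Suc k} = insert (Suc k) {0..k}" by auto
  have d: "(\<lambda>w. ennreal (q_dens p0 p e m pol k w)) \<in> borel_measurable (PiM {0..k} (\<lambda>_. Msaz))"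
    by measurable
  have d': "(\<lambda>w. ennreal (q_dens p0 p e m pol (Suc k) w))
      \<in> borel_measurable (PiM (insert (Suc k) {0..k}) (\<lambda>_. Msaz))"
    using q_dens_measurable[of "Suc k"] unfolding ivl by (rule measurable_compose[OF _ measurable_ennreal])
  have W: "(\<lambda>(w, x). ennreal (model_dens (w k) x)) \<in> borel_measurable (PiM {0..k} (\<lambda>_. Msaz) \<Otimes>\<^sub>M Msaz)"
    by measurable
  have factor: "ennreal (q_dens p0 p e m pol (Suc k) (w(Suc k := x)))
      = ennreal (q_dens p0 p e m pol k w) * ennreal (model_dens (w k) x)" for w x
    by (simp add: q_dens_Suc ennreal_mult q_dens_nonneg model_dens_nonneg)
  show ?thesis
    unfolding q_traj_def ivl
    by (rule Traj.nn_integral_density_PiM_insert[OF _ _ d d' W factor F[unfolded ivl]]) simp_all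
qed

lemma nn_integral_q_traj_restrict:
  assumes [measurable]: "G \<in> borel_measurable (PiM {0..k} (\<lambda>_. Msaz))"
  shows "(\<integral>\<^sup>+w. G (restrict w {0..k}) \<partial>qtraj (Suc k)) = (\<integral>\<^sup>+w. G w \<partial>qtraj k)"
proof -
  have [measurable]: "(\<lambda>w. restrict w {0..k}) \<in> measurable (PiM {0..Suc k} (\<lambda>_. Msaz)) (PiM {0..k} (\<lambda>_. Msaz))"
    by (rule measurable_restrict_subset) auto
  have "(\<integral>\<^sup>+w. G (restrict w {0..k}) \<partial>qtraj (Suc k))
      = (\<integral>\<^sup>+w. \<integral>\<^sup>+x. ennreal (model_dens (w k) x) * G (restrict (w(Suc k := x)) {0..k}) \<partial>Msaz \<partial>qtraj k)"
    by (rule nn_integral_q_traj_Suc) measurable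
  also have "\<dots> = (\<integral>\<^sup>+w. G w \<partial>qtraj k)"
  proof (rule nn_integral_cong)
    fix w assume "w \<in> space (qtraj k)"
    then have w: "w \<in> space (PiM {0..k} (\<lambda>_. Msaz))"
      by (simp add: space_q_traj)
    then have wk: "w k \<in> space Msaz"
      by (auto simp: space_PiM)
    have "restrict (w(Suc k := x)) {0..k} = w" for x
      using w by (auto simp: space_PiM PiE_def extensional_def fun_eq_iff)
    moreover have "(\<lambda>x. ennreal (model_dens (w k) x)) \<in> borel_measurable Msaz"
      using wk by measurable
    ultimately show "(\<integral>\<^sup>+x. ennreal (model_dens (w k) x) * G (restrict (w(Suc k := x)) {0..k}) \<partial>Msaz) = G w"
      using wk by (simp add: nn_integral_multc nn_integral_model_dens)
  qed
  finally show ?thesis .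
qed

lemma prob_space_q_traj: "prob_space (qtraj k)"
proof (rule prob_spaceI, induction k)
  case 0
  have "(\<lambda>w. ennreal (q_dens p0 p e m pol 0 w)) = (\<lambda>w. (\<lambda>(s, a, z). ennreal (p0 s * e s z * pol z a)) (w 0))"
    by (auto simp: fun_eq_iff q_dens_def trS_def trA_def trZ_def split: prod.split)
  then have "emeasure (qtraj 0) (space (qtraj 0)) = (\<integral>\<^sup>+(s, a, z). ennreal (p0 s * e s z * pol z a) \<partial>Msaz)"
    by (simp add: q_traj_def emeasure_density Traj.product_nn_integral_singleton)
  also have "\<dots> = 1"
    by (intro nn_integral_chain_density p0_meas p0_nonneg p0_norm e_meas e_nonneg e_norm)
  finally show ?case .
next
  case (Suc k)
  have "emeasure (qtraj (Suc k)) (space (qtraj (Suc k))) = (\<integral>\<^sup>+w. 1 \<partial>qtraj (Suc k))"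
    by simp
  also have "\<dots> = (\<integral>\<^sup>+w. 1 \<partial>qtraj k)"
    using nn_integral_q_traj_restrict[of "\<lambda>_. 1" k] by simp
  finally show ?case
    using Suc by simp
qed

lemma restrict_measurable_q_traj[measurable]:
  "(\<lambda>w. restrict w {0..k}) \<in> measurable (qtraj (Suc k)) (qtraj k)"
  unfolding measurable_cong_sets[OF sets_q_traj sets_q_traj]
  by (rule measurable_restrict_subset) auto

lemma distr_q_traj_restrict: "distr (qtraj (Suc k)) (qtraj k) (\<lambda>w. restrict w {0..k}) = qtraj k"
proof (rule measure_eqI)
  fix A assume "A \<in> sets (distr (qtraj (Suc k)) (qtraj k) (\<lambda>w. restrict w {0..k}))"
  then have A[measurable]: "A \<in> sets (PiM {0..k} (\<lambda>_. Msaz))"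
    by (simp add: sets_q_traj)
  have "emeasure (distr (qtraj (Suc k)) (qtraj k) (\<lambda>w. restrict w {0..k})) A
      = (\<integral>\<^sup>+w. indicator A w \<partial>distr (qtraj (Suc k)) (qtraj k) (\<lambda>w. restrict w {0..k}))"
    by (rule nn_integral_indicator[symmetric]) (simp add: sets_q_traj)
  also have "\<dots> = (\<integral>\<^sup>+w. indicator A (restrict w {0..k}) \<partial>qtraj (Suc k))"
    by (rule nn_integral_distr) measurable
  also have "\<dots> = (\<integral>\<^sup>+w. indicator A w \<partial>qtraj k)"
    by (rule nn_integral_q_traj_restrict) measurable
  also have "\<dots> = emeasure (qtraj k) A"
    by (rule nn_integral_indicator) (simp add: sets_q_traj)
  finally show "emeasure (distr (qtraj (Suc k)) (qtraj k) (\<lambda>w. restrict w {0..k})) A = emeasure (qtraj k) A" .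
qed simp

lemma AE_q_traj_restrict:
  assumes "AE w in qtraj k. P w"
  shows "AE w in qtraj (Suc k). P (restrict w {0..k})"
proof (rule AE_distrD[OF restrict_measurable_q_traj])
  show "AE w in distr (qtraj (Suc k)) (qtraj k) (\<lambda>w. restrict w {0..k}). P w"
    unfolding distr_q_traj_restrict by (fact assms)
qed

lemma integral_q_traj_restrict:
  fixes G :: "_ \<Rightarrow> real"
  assumes G: "integrable (qtraj k) G"
  shows "integrable (qtraj (Suc k)) (\<lambda>w. G (restrict w {0..k}))"
    and "(\<integral>w. G (restrict w {0..k}) \<partial>qtraj (Suc k)) = (\<integral>w. G w \<partial>qtraj k)"
proof -
  have G_meas: "G \<in> borel_measurable (qtraj k)"
    using G by (rule borel_measurable_integrable)
  have "integrable (qtraj k) G \<longleftrightarrow> integrable (qtraj (Suc k)) (\<lambda>w. G (restrict w {0..k}))"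
    using integrable_distr_eq[OF restrict_measurable_q_traj G_meas] unfolding distr_q_traj_restrict .
  with G show "integrable (qtraj (Suc k)) (\<lambda>w. G (restrict w {0..k}))"
    by blast
  show "(\<integral>w. G (restrict w {0..k}) \<partial>qtraj (Suc k)) = (\<integral>w. G w \<partial>qtraj k)"
    using integral_distr[OF restrict_measurable_q_traj G_meas] unfolding distr_q_traj_restrict by simp
qed

section \<open>The importance ratio\<close>

(* Division by zero gives 0, so the ratio vanishes where m z a z' = 0 and where Q s a is 0 or
   infinite (enn2real maps infinity to 0). *)
definition importance_ratio :: "'s \<times> 'a \<times> 'z \<Rightarrow> 's \<times> 'a \<times> 'z \<Rightarrow> real" where
  "importance_ratio = (\<lambda>(s, a, z) (s', a', z').
     ((1 - \<gamma>) * r s a + \<gamma> * enn2real (Q s' a')) * e s' z' / (m z a z' * enn2real (Q s a)))"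

lemma importance_ratio_nonneg: "0 \<le> importance_ratio y x"
  using gamma
  by (auto simp: importance_ratio_def r_nonneg e_nonneg m_nonneg split: prod.split
      intro!: divide_nonneg_nonneg mult_nonneg_nonneg add_nonneg_nonneg)

lemma importance_ratio_measurable[measurable]:
  "case_prod importance_ratio \<in> borel_measurable (Msaz \<Otimes>\<^sub>M Msaz)"
proof -
  note [measurable] = measurable_Pair_compose_split[OF Q_measurable]
  show ?thesis
    unfolding importance_ratio_def case_prod_beta by measurable
qed

lemma model_dens_mult_importance_ratio_le:
  assumes A_pos: "0 < enn2real (Q s a)"
  shows "ennreal (model_dens (s, a, z) x * importance_ratio (s, a, z) x)
    \<le> ennreal (1 / enn2real (Q s a))
      * (ennreal (trans_dens s a x) * (ennreal ((1 - \<gamma>) * r s a) + ennreal \<gamma> * Q (fst x) (fst (snd x))))"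
proof -
  obtain s' a' z' where x: "x = (s', a', z')"
    by (cases x)
  let ?A = "enn2real (Q s a)"
  let ?B = "enn2real (Q s' a')"
  show ?thesis
  proof (cases "m z a z' = 0")
    case True
    then show ?thesis
      by (simp add: x model_dens_def)
  next
    case False
    have "ennreal (model_dens (s, a, z) x * importance_ratio (s, a, z) x)
        = ennreal (1 / ?A * (trans_dens s a x * ((1 - \<gamma>) * r s a + \<gamma> * ?B)))"
      using False A_pos unfolding x
      by (intro arg_cong[where f = ennreal])
         (simp add: model_dens_def importance_ratio_def trans_dens_def field_simps)
    also have "\<dots> = ennreal (1 / ?A) * (ennreal (trans_dens s a x)
        * (ennreal ((1 - \<gamma>) * r s a) + ennreal \<gamma> * ennreal ?B))"
    proof -
      have "0 \<le> 1 / ?A" "0 \<le> (1 - \<gamma>) * r s a"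
        using gamma r_nonneg by simp_all
      then show ?thesis
        by (simp only: ennreal_mult ennreal_plus mult_nonneg_nonneg add_nonneg_nonneg
            trans_dens_nonneg gamma(1) enn2real_nonneg)
    qed
    also have "\<dots> \<le> ennreal (1 / ?A)
        * (ennreal (trans_dens s a x) * (ennreal ((1 - \<gamma>) * r s a) + ennreal \<gamma> * Q (fst x) (fst (snd x))))"
      by (auto simp: x ennreal_enn2real_if intro!: mult_left_mono add_left_mono)
    finally show ?thesis .
  qed
qed

lemma nn_integral_importance_ratio_le_1:
  assumes y: "y \<in> space Msaz"
  shows "(\<integral>\<^sup>+x. ennreal (model_dens y x * importance_ratio y x) \<partial>Msaz) \<le> 1"
proof -
  obtain s a z where y_eq: "y = (s, a, z)" and sa: "s \<in> space Ms" "a \<in> space Ma"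
    using y by (cases y) (auto simp: space_pair_measure)
  define A where "A = enn2real (Q s a)"
  show ?thesis
  proof (cases "A = 0")
    case True
    then show ?thesis
      by (simp add: importance_ratio_def y_eq A_def case_prod_beta)
  next
    case False
    then have A_pos: "0 < A"
      by (simp add: A_def order_le_neq_trans)
    then have Q_eq: "Q s a = ennreal A"
      unfolding A_def enn2real_positive_iff by (auto simp: ennreal_enn2real_if)
    let ?H = "\<lambda>s' a'. ennreal ((1 - \<gamma>) * r s a) + ennreal \<gamma> * Q s' a'"
    note [measurable] = measurable_Pair_compose_split[OF Q_measurable]
    have "(\<integral>\<^sup>+x. ennreal (model_dens y x * importance_ratio y x) \<partial>Msaz)
        \<le> (\<integral>\<^sup>+x. ennreal (1 / A) * (ennreal (trans_dens s a x) * ?H (fst x) (fst (snd x))) \<partial>Msaz)"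
      using A_pos unfolding y_eq A_def by (intro nn_integral_mono model_dens_mult_importance_ratio_le)
    also have "\<dots> = ennreal (1 / A) * trans_op ?H s a"
      unfolding trans_op_def using sa by (intro nn_integral_cmult) measurable
    also have "trans_op ?H s a = ennreal ((1 - \<gamma>) * r s a) + ennreal \<gamma> * trans_op Q s a"
      using sa by (simp add: trans_op_add trans_op_const trans_op_cmult Q_measurable)
    also have "\<dots> = Q s a"
      by (rule Q_bellman[OF sa, symmetric])
    also have "ennreal (1 / A) * Q s a = 1"
      using A_pos by (simp add: Q_eq ennreal_mult[symmetric])
    finally show ?thesis .
  qed
qed

lemma nn_integral_importance_ratio_q_traj:
  "(\<integral>\<^sup>+w. ennreal (importance_ratio (w K) (w (Suc K))) \<partial>qtraj (Suc K)) \<le> 1"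
proof -
  have "(\<integral>\<^sup>+w. ennreal (importance_ratio (w K) (w (Suc K))) \<partial>qtraj (Suc K))
      = (\<integral>\<^sup>+w. \<integral>\<^sup>+x. ennreal (model_dens (w K) x * importance_ratio (w K) x) \<partial>Msaz \<partial>qtraj K)"
    by (subst nn_integral_q_traj_Suc)
       (measurable, simp add: ennreal_mult model_dens_nonneg importance_ratio_nonneg)
  also have "\<dots> \<le> (\<integral>\<^sup>+w. 1 \<partial>qtraj K)"
    by (intro nn_integral_mono nn_integral_importance_ratio_le_1) (auto simp: space_q_traj space_PiM)
  also have "\<dots> = 1"
    using prob_space.emeasure_space_1[OF prob_space_q_traj] by simp
  finally show ?thesis .
qed

lemma integrable_importance_ratio_q_traj:
  "integrable (qtraj (Suc K)) (\<lambda>w. importance_ratio (w K) (w (Suc K)))"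
  using nn_integral_importance_ratio_q_traj[of K]
  by (intro integrableI_nonneg)
     (measurable, auto simp: importance_ratio_nonneg ennreal_one_less_top intro: le_less_trans)

lemma integral_importance_ratio_q_traj_le_1:
  "(\<integral>w. importance_ratio (w K) (w (Suc K)) \<partial>qtraj (Suc K)) \<le> 1"
proof -
  have "(\<integral>w. importance_ratio (w K) (w (Suc K)) \<partial>qtraj (Suc K))
      = enn2real (\<integral>\<^sup>+w. ennreal (importance_ratio (w K) (w (Suc K))) \<partial>qtraj (Suc K))"
    by (rule integral_eq_nn_integral) (measurable, simp add: importance_ratio_nonneg)
  also have "\<dots> \<le> 1"
    using nn_integral_importance_ratio_q_traj[of K] by (simp add: enn2real_leI)
  finally show ?thesis .
qed

lemma L_integrand_Suc_le:
  assumes pos: "0 < r (trS w K) (trA w K)" "0 < e (trS w (Suc K)) (trZ w (Suc K))"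
    "0 < m (trZ w K) (trA w K) (trZ w (Suc K))"
    "0 < Q (trS w K) (trA w K)" "Q (trS w K) (trA w K) < \<infinity>"
    "0 < Q (trS w (Suc K)) (trA w (Suc K))" "Q (trS w (Suc K)) (trA w (Suc K)) < \<infinity>"
  shows "L_integrand Q e m r \<gamma> (Suc K) w
    \<le> L_integrand Q e m r \<gamma> K w + \<gamma> ^ K * (importance_ratio (w K) (w (Suc K)) - 1)"
proof -
  define R E M A B where "R = r (trS w K) (trA w K)" and "E = e (trS w (Suc K)) (trZ w (Suc K))"
    and "M = m (trZ w K) (trA w K) (trZ w (Suc K))" and "A = enn2real (Q (trS w K) (trA w K))"
    and "B = enn2real (Q (trS w (Suc K)) (trA w (Suc K)))"
  have pos': "0 < R" "0 < E" "0 < M" "0 < A" "0 < B"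
    using pos by (auto simp: R_def E_def M_def A_def B_def enn2real_positive_iff)
  have "L_integrand Q e m r \<gamma> (Suc K) w
      = L_integrand Q e m r \<gamma> K w + \<gamma> ^ K * ((1 - \<gamma>) * ln R + ln E - ln M + \<gamma> * ln B - ln A)"
    unfolding L_integrand_def R_def E_def M_def A_def B_def by (simp add: algebra_simps)
  also have "\<dots> \<le> L_integrand Q e m r \<gamma> K w + \<gamma> ^ K * (((1 - \<gamma>) * R + \<gamma> * B) * E / (M * A) - 1)"
    using gamma pos' by (intro add_left_mono mult_left_mono ln_mixture_le) auto
  also have "((1 - \<gamma>) * R + \<gamma> * B) * E / (M * A) = importance_ratio (w K) (w (Suc K))"
    by (simp add: importance_ratio_def R_def E_def M_def A_def B_def trS_def trA_def trZ_def case_prod_beta)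
  finally show ?thesis .
qed

lemma AE_L_integrand_Suc_le:
  assumes finK: "L_finite (qtraj K) Q e m r \<gamma> K"
    and finK1: "L_finite (qtraj (Suc K)) Q e m r \<gamma> (Suc K)"
  shows "AE w in qtraj (Suc K). L_integrand Q e m r \<gamma> (Suc K) w
    \<le> L_integrand Q e m r \<gamma> K w + \<gamma> ^ K * (importance_ratio (w K) (w (Suc K)) - 1)"
proof -
  have "AE w in qtraj K. 0 < Q (trS w K) (trA w K) \<and> Q (trS w K) (trA w K) < \<infinity>"
    using finK by (auto simp: L_finite_def elim: eventually_mono)
  from AE_q_traj_restrict[OF this]
  have "AE w in qtraj (Suc K). 0 < Q (trS w K) (trA w K) \<and> Q (trS w K) (trA w K) < \<infinity>"
    by (simp add: trS_def trA_def)
  moreover have "AE w in qtraj (Suc K). (\<forall>t<Suc K. 0 < r (trS w t) (trA w t)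
        \<and> 0 < e (trS w (Suc t)) (trZ w (Suc t)) \<and> 0 < m (trZ w t) (trA w t) (trZ w (Suc t)))
      \<and> 0 < Q (trS w (Suc K)) (trA w (Suc K)) \<and> Q (trS w (Suc K)) (trA w (Suc K)) < \<infinity>"
    using finK1 by (simp add: L_finite_def)
  ultimately show ?thesis
    by eventually_elim (intro L_integrand_Suc_le, auto)
qed

theorem L_obj_Suc_le:
  assumes finK: "L_finite (qtraj K) Q e m r \<gamma> K"
    and finK1: "L_finite (qtraj (Suc K)) Q e m r \<gamma> (Suc K)"
  shows "L_obj (qtraj (Suc K)) Q e m r \<gamma> (Suc K) \<le> L_obj (qtraj K) Q e m r \<gamma> K"
proof -
  interpret prob_space "qtraj (Suc K)"
    by (rule prob_space_q_traj)
  let ?f = "L_integrand Q e m r \<gamma> K"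
  let ?u = "\<lambda>w. importance_ratio (w K) (w (Suc K))"
  have "integrable (qtraj K) ?f"
    using finK by (simp add: L_finite_def)
  moreover have "?f (restrict w {0..K}) = ?f w" for w
    unfolding L_integrand_def trS_def trA_def trZ_def by (intro arg_cong2[where f = "(+)"] sum.cong) auto
  ultimately have int_f: "integrable (qtraj (Suc K)) ?f"
    and L_K: "(\<integral>w. ?f w \<partial>qtraj (Suc K)) = L_obj (qtraj K) Q e m r \<gamma> K"
    using integral_q_traj_restrict[of K ?f] by (simp_all add: L_obj_def)
  have "L_obj (qtraj (Suc K)) Q e m r \<gamma> (Suc K) \<le> (\<integral>w. ?f w + \<gamma> ^ K * (?u w - 1) \<partial>qtraj (Suc K))"
    unfolding L_obj_def using finK1 int_f integrable_importance_ratio_q_traj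
    by (intro integral_mono_AE AE_L_integrand_Suc_le[OF finK finK1]) (auto simp: L_finite_def)
  also have "\<dots> = L_obj (qtraj K) Q e m r \<gamma> K + \<gamma> ^ K * ((\<integral>w. ?u w \<partial>qtraj (Suc K)) - 1)"
    using int_f integrable_importance_ratio_q_traj by (simp add: L_K prob_space)
  also have "\<dots> \<le> L_obj (qtraj K) Q e m r \<gamma> K"
    using integral_importance_ratio_q_traj_le_1[of K] gamma by (simp add: mult_nonneg_nonpos)
  finally show ?thesis .
qed

end

theorem mainTheorem3:
  fixes Ms :: "'s measure" and Ma :: "'a measure" and Mz :: "'z measure"
    and p0 :: "'s \<Rightarrow> real" and p :: "'s \<Rightarrow> 'a \<Rightarrow> 's \<Rightarrow> real"
    and e :: "'s \<Rightarrow> 'z \<Rightarrow> real" and m :: "'z \<Rightarrow> 'a \<Rightarrow> 'z \<Rightarrow> real"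
    and pol :: "'z \<Rightarrow> 'a \<Rightarrow> real" and r :: "'s \<Rightarrow> 'a \<Rightarrow> real"
    and \<gamma> :: real and K :: nat
  assumes sfS: "sigma_finite_measure Ms"
    and sfA: "sigma_finite_measure Ma"
    and sfZ: "sigma_finite_measure Mz"
    and gamma: "0 \<le> \<gamma>" "\<gamma> < 1"
    and p0_meas: "p0 \<in> borel_measurable Ms"
    and p0_nonneg: "\<And>s. 0 \<le> p0 s"
    and p0_norm: "(\<integral>\<^sup>+ s. ennreal (p0 s) \<partial>Ms) = 1"
    and p_meas: "(\<lambda>(s, a, s'). p s a s') \<in> borel_measurable (Ms \<Otimes>\<^sub>M Ma \<Otimes>\<^sub>M Ms)"
    and p_nonneg: "\<And>s a s'. 0 \<le> p s a s'"
    and p_norm: "\<And>s a. s \<in> space Ms \<Longrightarrow> a \<in> space Ma \<Longrightarrow>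
                   (\<integral>\<^sup>+ s'. ennreal (p s a s') \<partial>Ms) = 1"
    and e_meas: "(\<lambda>(s, z). e s z) \<in> borel_measurable (Ms \<Otimes>\<^sub>M Mz)"
    and e_nonneg: "\<And>s z. 0 \<le> e s z"
    and e_norm: "\<And>s. s \<in> space Ms \<Longrightarrow> (\<integral>\<^sup>+ z. ennreal (e s z) \<partial>Mz) = 1"
    and m_meas: "(\<lambda>(z, a, z'). m z a z') \<in> borel_measurable (Mz \<Otimes>\<^sub>M Ma \<Otimes>\<^sub>M Mz)"
    and m_nonneg: "\<And>z a z'. 0 \<le> m z a z'"
    and m_norm: "\<And>z a. z \<in> space Mz \<Longrightarrow> a \<in> space Ma \<Longrightarrow>
                   (\<integral>\<^sup>+ z'. ennreal (m z a z') \<partial>Mz) = 1"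
    and pol_meas: "(\<lambda>(z, a). pol z a) \<in> borel_measurable (Mz \<Otimes>\<^sub>M Ma)"
    and pol_nonneg: "\<And>z a. 0 \<le> pol z a"
    and pol_norm: "\<And>z. z \<in> space Mz \<Longrightarrow> (\<integral>\<^sup>+ a. ennreal (pol z a) \<partial>Ma) = 1"
    and r_meas: "(\<lambda>(s, a). r s a) \<in> borel_measurable (Ms \<Otimes>\<^sub>M Ma)"
    and r_nonneg: "\<And>s a. 0 \<le> r s a"
    and finK: "L_finite (q_traj Ms Ma Mz p0 p e m pol K) (Qfun Ms Ma Mz p e pol r \<gamma>)
                        e m r \<gamma> K"
    and finK1: "L_finite (q_traj Ms Ma Mz p0 p e m pol (Suc K)) (Qfun Ms Ma Mz p e pol r \<gamma>)
                        e m r \<gamma> (Suc K)"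
  shows "L_obj (q_traj Ms Ma Mz p0 p e m pol K) (Qfun Ms Ma Mz p e pol r \<gamma>) e m r \<gamma> K
         \<ge> L_obj (q_traj Ms Ma Mz p0 p e m pol (Suc K)) (Qfun Ms Ma Mz p e pol r \<gamma>)
               e m r \<gamma> (Suc K)"
proof -
  interpret latent_mdp Ms Ma Mz p0 p e m pol r \<gamma>
    by (rule latent_mdp.intro) (fact assms)+
  show ?thesis
    using L_obj_Suc_le[OF finK finK1] by simp
qed

end
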